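(* Consider the ODE $$w_r=\frac{2w^3+2w-\sqrt3(1+w^2)^{3/2}}{r},\qquad r>0.$$ Its solutions are, up to restriction to subintervals, exactly the following: (1) the constant $w\equiv\sqrt3$; (2) for each $\rho_0>0$, $w(r)=\dfrac{r^2+\frac{\sqrt3}{2}\rho_0^2}{\sqrt{\rho_0^4-(r^2+\frac{\sqrt3}{2}\rho_0^2)^2}}$ on $0<r<r_0:=\sqrt{\frac{2-\sqrt3}{2}}\rho_0$; it satisfies $w>\sqrt3$, $w(r)\to\sqrt3$ as $r\to0$, $w(r)\to+\infty$ as $r\to r_0$, and for fixed $r$, $w(r)\to\sqrt3$ as $\rho_0\to\infty$; (3) for each $a>0$ (equivalently $\rho_0>0$ with $a^2=\frac{\sqrt3}{2}\rho_0^2$), $w(r)=\dfrac{-\sqrt3(r^2-a^2)}{\sqrt{4a^4-3(r^2-a^2)^2}}=\dfrac{-(r^2-\frac{\sqrt3}{2}\rho_0^2)}{\sqrt{\rho_0^4-(r^2-\frac{\sqrt3}{2}\rho_0^2)^2}}$ on $0<r<b:=\sqrt{\frac{2+\sqrt3}{\sqrt3}}\,a=\sqrt{\frac{2+\sqrt3}{2}}\rho_0$; it satisfies $w(a)=0$, $w<\sqrt3$, $w(r)\to\sqrt3$ as $r\to0$, $w(r)\to-\infty$ as $r\to b$, and for fixed $r$, $w(r)\to\sqrt3$ as $a\to\infty$.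
   Context: This ODE arises from $v_r=\frac{2v^3+3r^2v-\sqrt3(v^2+r^2)^{3/2}}{r^3}$ with $v=u_r$, $w=v/r$, for rotationally symmetric absolute $E_1$-minimizing graphs $t=u(r)$ in the Heisenberg group. *)

theory Defs
  imports "HOL-Analysis.Analysis"
begin

definition ode_rhs :: "real \<Rightarrow> real \<Rightarrow> real" where
  "ode_rhs r w = (2 * w ^ 3 + 2 * w - sqrt 3 * (1 + w\<^sup>2) powr (3/2)) / r"

definition solves_on :: "(real \<Rightarrow> real) \<Rightarrow> real set \<Rightarrow> bool" where
  "solves_on w I \<longleftrightarrow> I \<subseteq> {0<..} \<and>
     (\<forall>r\<in>I. (w has_real_derivative ode_rhs r (w r)) (at r))"

definition w_plus :: "real \<Rightarrow> real \<Rightarrow> real" where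
  "w_plus \<rho> r = (r\<^sup>2 + sqrt 3 / 2 * \<rho>\<^sup>2) / sqrt (\<rho> ^ 4 - (r\<^sup>2 + sqrt 3 / 2 * \<rho>\<^sup>2)\<^sup>2)"

definition r0 :: "real \<Rightarrow> real" where
  "r0 \<rho> = sqrt ((2 - sqrt 3) / 2) * \<rho>"

definition w_minus :: "real \<Rightarrow> real \<Rightarrow> real" where
  "w_minus a r = - sqrt 3 * (r\<^sup>2 - a\<^sup>2) / sqrt (4 * a ^ 4 - 3 * (r\<^sup>2 - a\<^sup>2)\<^sup>2)"

definition b_end :: "real \<Rightarrow> real" where
  "b_end a = sqrt ((2 + sqrt 3) / sqrt 3) * a"

end

theory Submission
  imports Defs
begin

text \<open>
  In terms of u = w / sqrt (1 + w^2), the sine of the slope angle of w, the equation becomes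
  linear: r u_r = 2 (u - sqrt 3 / 2). Hence (u - sqrt 3 / 2) / r^2 is a first integral, and on
  an interval every solution is w = u / sqrt (1 - u^2) with u = sqrt 3 / 2 + k r^2, defined as
  long as |u| < 1. The sign of k gives the three cases: k = 0 is the constant sqrt 3; for
  k = 1 / rho^2 the solution is w_plus, which blows up where u reaches 1, at r = r0; for
  k = - sqrt 3 / (2 a^2) it is w_minus, which tends to minus infinity where u reaches -1, at
  r = b_end a.
\<close>

lemma sqrt3_less_2: "sqrt 3 < 2"
proof -
  have "sqrt 3 < sqrt 4" by (rule real_sqrt_less_mono) simp
  thus ?thesis by simp
qed

lemma abs_sqrt3_half_less_1: "\<bar>sqrt 3 / 2\<bar> < (1::real)"
  using sqrt3_less_2 by simp

lemma powr_three_halves: "(x::real) \<ge> 0 \<Longrightarrow> x powr (3/2) = (sqrt x) ^ 3"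
proof -
  assume "x \<ge> 0"
  have "x powr (3/2) = x powr (1 + 1/2)" by simp
  also have "\<dots> = x * sqrt x" using \<open>x \<ge> 0\<close> by (simp only: powr_add powr_one powr_half_sqrt)
  also have "\<dots> = (sqrt x) ^ 3" using \<open>x \<ge> 0\<close> by (simp add: power3_eq_cube)
  finally show ?thesis .
qed

lemma abs_less_sqrt_one_plus_square: "\<bar>w\<bar> < sqrt (1 + w\<^sup>2)"
proof -
  have "\<bar>w\<bar> = sqrt (w\<^sup>2)" by simp
  also have "\<dots> < sqrt (1 + w\<^sup>2)" by (rule real_sqrt_less_mono) simp
  finally show ?thesis .
qed

lemma less_iff_square_less: "(0::real) \<le> x \<Longrightarrow> 0 \<le> y \<Longrightarrow> x < y \<longleftrightarrow> x\<^sup>2 < y\<^sup>2"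
  by (metis not_le power_mono_iff zero_less_numeral)

lemma tendsto_divide_square_at_top: "((\<lambda>x::real. c / x\<^sup>2) \<longlongrightarrow> 0) at_top"
  by (intro tendsto_divide_0[OF tendsto_const] filterlim_at_top_imp_at_infinity
      filterlim_pow_at_top filterlim_ident) simp

definition sine_of_slope :: "real \<Rightarrow> real" where
  "sine_of_slope w = w / sqrt (1 + w\<^sup>2)"

definition slope_of_sine :: "real \<Rightarrow> real" where
  "slope_of_sine u = u / sqrt (1 - u\<^sup>2)"

lemma abs_sine_of_slope_less_1: "\<bar>sine_of_slope w\<bar> < 1"
proof -
  have "sqrt (1 + w\<^sup>2) > 0" by (simp add: add_pos_nonneg)
  hence "\<bar>sine_of_slope w\<bar> = \<bar>w\<bar> / sqrt (1 + w\<^sup>2)"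
    by (simp add: sine_of_slope_def abs_divide)
  also have "\<dots> < 1"
    using abs_less_sqrt_one_plus_square \<open>sqrt (1 + w\<^sup>2) > 0\<close> by (simp only: divide_less_eq_1_pos)
  finally show ?thesis .
qed

lemma slope_of_sine_sine_of_slope: "slope_of_sine (sine_of_slope w) = w"
proof -
  have p: "(sqrt (1 + w\<^sup>2))\<^sup>2 = 1 + w\<^sup>2" "sqrt (1 + w\<^sup>2) > 0"
    by (simp_all add: add_pos_nonneg)
  hence "1 - (sine_of_slope w)\<^sup>2 = (1 / sqrt (1 + w\<^sup>2))\<^sup>2"
    unfolding sine_of_slope_def by (simp add: field_simps)
  with p(2) show ?thesis by (simp add: slope_of_sine_def sine_of_slope_def)
qed

lemma sine_of_slope_slope_of_sine:
  assumes "\<bar>u\<bar> < 1"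
  shows "sqrt (1 + (slope_of_sine u)\<^sup>2) = 1 / sqrt (1 - u\<^sup>2)"
    and "sine_of_slope (slope_of_sine u) = u"
proof -
  have q: "1 - u\<^sup>2 > 0" using assms by (simp add: abs_square_less_1)
  hence "1 + (slope_of_sine u)\<^sup>2 = (1 / sqrt (1 - u\<^sup>2))\<^sup>2"
    by (simp add: slope_of_sine_def field_simps)
  with q show *: "sqrt (1 + (slope_of_sine u)\<^sup>2) = 1 / sqrt (1 - u\<^sup>2)" by simp
  show "sine_of_slope (slope_of_sine u) = u"
    using q unfolding sine_of_slope_def * by (simp add: slope_of_sine_def)
qed

lemma slope_of_sine_divide:
  assumes "m > 0"
  shows "slope_of_sine (x / m) = x / sqrt (m\<^sup>2 - x\<^sup>2)"
proof -
  have "1 - (x / m)\<^sup>2 = (m\<^sup>2 - x\<^sup>2) / m\<^sup>2" using assms by (simp add: field_simps)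
  thus ?thesis using assms by (simp add: slope_of_sine_def real_sqrt_divide)
qed

lemma slope_of_sine_sqrt3_half: "slope_of_sine (sqrt 3 / 2) = sqrt 3"
  using slope_of_sine_divide[of 2 "sqrt 3"] by simp

lemma slope_of_sine_minus: "slope_of_sine (- u) = - slope_of_sine u"
  by (simp add: slope_of_sine_def)

lemma has_real_derivative_slope_of_sine:
  assumes "\<bar>u\<bar> < 1"
  shows "(slope_of_sine has_real_derivative 1 / (sqrt (1 - u\<^sup>2)) ^ 3) (at u)"
proof -
  have q: "1 - u\<^sup>2 > 0" using assms by (simp add: abs_square_less_1)
  have "(slope_of_sine has_real_derivative
      (sqrt (1 - u\<^sup>2) + u * u / sqrt (1 - u\<^sup>2)) / (sqrt (1 - u\<^sup>2))\<^sup>2) (at u)"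
    unfolding slope_of_sine_def[abs_def] using q
    by (auto intro!: derivative_eq_intros simp: power2_eq_square field_simps)
  moreover have "(sqrt (1 - u\<^sup>2) + u * u / sqrt (1 - u\<^sup>2)) / (sqrt (1 - u\<^sup>2))\<^sup>2
      = 1 / (sqrt (1 - u\<^sup>2)) ^ 3"
    using q by (simp add: field_simps power2_eq_square power3_eq_cube)
  ultimately show ?thesis by simp
qed

lemma has_real_derivative_sine_of_slope:
  "(sine_of_slope has_real_derivative 1 / (sqrt (1 + w\<^sup>2)) ^ 3) (at w)"
proof -
  have p: "1 + w\<^sup>2 > 0" by (simp add: add_pos_nonneg)
  have "(sine_of_slope has_real_derivative
      (sqrt (1 + w\<^sup>2) - w * w / sqrt (1 + w\<^sup>2)) / (sqrt (1 + w\<^sup>2))\<^sup>2) (at w)"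
    unfolding sine_of_slope_def[abs_def] using p
    by (auto intro!: derivative_eq_intros simp: power2_eq_square field_simps)
  moreover have "(sqrt (1 + w\<^sup>2) - w * w / sqrt (1 + w\<^sup>2)) / (sqrt (1 + w\<^sup>2))\<^sup>2
      = 1 / (sqrt (1 + w\<^sup>2)) ^ 3"
    using p by (simp add: field_simps power2_eq_square power3_eq_cube)
  ultimately show ?thesis by simp
qed

lemma slope_of_sine_strict_mono:
  assumes "-1 < u" "u < v" "v < 1"
  shows "slope_of_sine u < slope_of_sine v"
proof (rule DERIV_pos_imp_increasing[OF \<open>u < v\<close>])
  fix x assume "u \<le> x" "x \<le> v"
  hence "\<bar>x\<bar> < 1" using assms by auto
  hence "1 - x\<^sup>2 > 0" by (simp add: abs_square_less_1)
  thus "\<exists>y. (slope_of_sine has_real_derivative y) (at x) \<and> y > 0"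
    using has_real_derivative_slope_of_sine[OF \<open>\<bar>x\<bar> < 1\<close>] by auto
qed

lemma tendsto_slope_of_sine:
  assumes "(u \<longlongrightarrow> u0) F" "\<bar>u0\<bar> < 1"
  shows "((\<lambda>x. slope_of_sine (u x)) \<longlongrightarrow> slope_of_sine u0) F"
  using isCont_tendsto_compose[OF DERIV_isCont[OF has_real_derivative_slope_of_sine] assms(1)]
    assms(2) .

lemma filterlim_slope_of_sine_at_top:
  assumes "(u \<longlongrightarrow> 1) F" "eventually (\<lambda>x. \<bar>u x\<bar> < 1) F"
  shows "filterlim (\<lambda>x. slope_of_sine (u x)) at_top F"
  unfolding slope_of_sine_def
proof (rule LIM_at_top_divide[OF assms(1)])
  show "((\<lambda>x. sqrt (1 - (u x)\<^sup>2)) \<longlongrightarrow> 0) F"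
    using tendsto_real_sqrt[OF tendsto_diff[OF tendsto_const tendsto_power[OF assms(1), of 2]], of 1]
    by simp
  show "eventually (\<lambda>x. 0 < sqrt (1 - (u x)\<^sup>2)) F"
    using assms(2) by eventually_elim (simp add: abs_square_less_1)
qed simp

lemma filterlim_slope_of_sine_at_bot:
  assumes "(u \<longlongrightarrow> -1) F" "eventually (\<lambda>x. \<bar>u x\<bar> < 1) F"
  shows "filterlim (\<lambda>x. slope_of_sine (u x)) at_bot F"
proof -
  have "filterlim (\<lambda>x. slope_of_sine (- u x)) at_top F"
    using tendsto_minus[OF assms(1)] assms(2) by (intro filterlim_slope_of_sine_at_top) auto
  thus ?thesis unfolding filterlim_uminus_at_bot slope_of_sine_minus .
qed

lemma ode_rhs_eq_sine_of_slope:
  "ode_rhs r w = (2 * sine_of_slope w - sqrt 3) * (sqrt (1 + w\<^sup>2)) ^ 3 / r"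
proof -
  define p where "p = sqrt (1 + w\<^sup>2)"
  have p: "p > 0" "p\<^sup>2 = 1 + w\<^sup>2" by (simp_all add: p_def add_pos_nonneg)
  have "(1 + w\<^sup>2) powr (3/2) = p ^ 3"
    unfolding p_def by (rule powr_three_halves) (simp add: add_pos_nonneg)
  moreover have "2 * w ^ 3 + 2 * w = 2 * (w / p) * p ^ 3"
  proof -
    have "2 * (w / p) * p ^ 3 = 2 * w * p\<^sup>2" using p(1) by (simp add: power2_eq_square power3_eq_cube)
    also have "\<dots> = 2 * w ^ 3 + 2 * w" unfolding p(2) by (simp add: algebra_simps power3_eq_cube power2_eq_square)
    finally show ?thesis by simp
  qed
  ultimately show ?thesis
    unfolding ode_rhs_def sine_of_slope_def p_def[symmetric] by (simp add: left_diff_distrib)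
qed

lemma sine_of_slope_along_solution:
  assumes "r \<noteq> 0" "(w has_real_derivative ode_rhs r (w r)) (at r)"
  shows "((\<lambda>x. sine_of_slope (w x)) has_real_derivative
           2 * (sine_of_slope (w r) - sqrt 3 / 2) / r) (at r)"
proof (rule DERIV_cong)
  show "((\<lambda>x. sine_of_slope (w x)) has_real_derivative
      1 / (sqrt (1 + (w r)\<^sup>2)) ^ 3 * ode_rhs r (w r)) (at r)"
    by (rule DERIV_chain2[OF has_real_derivative_sine_of_slope assms(2)])
  define p where "p = sqrt (1 + (w r)\<^sup>2)"
  have "p > 0" by (simp add: p_def add_pos_nonneg)
  with assms(1) show "1 / (sqrt (1 + (w r)\<^sup>2)) ^ 3 * ode_rhs r (w r)
      = 2 * (sine_of_slope (w r) - sqrt 3 / 2) / r"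
    unfolding ode_rhs_eq_sine_of_slope p_def[symmetric] by (simp add: field_simps)
qed

lemma first_integral_has_derivative_zero:
  assumes "r \<noteq> 0" "(w has_real_derivative ode_rhs r (w r)) (at r)"
  shows "((\<lambda>x. (sine_of_slope (w x) - sqrt 3 / 2) / x\<^sup>2) has_real_derivative 0) (at r)"
proof -
  define s where "s = sine_of_slope (w r) - sqrt 3 / 2"
  have num: "((\<lambda>x. sine_of_slope (w x) - sqrt 3 / 2) has_real_derivative 2 * s / r) (at r)"
    using DERIV_diff[OF sine_of_slope_along_solution[OF assms] DERIV_const] by (simp add: s_def)
  have den: "((\<lambda>x. x\<^sup>2) has_real_derivative 2 * r) (at r)"
    by (auto intro!: derivative_eq_intros)
  have "((\<lambda>x. (sine_of_slope (w x) - sqrt 3 / 2) / x\<^sup>2) has_real_derivative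
      (2 * s / r * r\<^sup>2 - 2 * r * s) / (r\<^sup>2) ^ Suc (Suc 0)) (at r)"
    using DERIV_quotient[OF num den] assms(1) by (simp add: s_def)
  moreover have "2 * s / r * r\<^sup>2 - 2 * r * s = 0"
    using assms(1) by (simp add: power2_eq_square)
  ultimately show ?thesis by simp
qed

lemma solves_on_imp_sine_of_slope_quadratic:
  assumes "connected I" "solves_on w I"
  obtains k where "\<And>r. r \<in> I \<Longrightarrow> sine_of_slope (w r) = sqrt 3 / 2 + k * r\<^sup>2"
proof -
  have pos: "\<And>r. r \<in> I \<Longrightarrow> r > 0"
    and sol: "\<And>r. r \<in> I \<Longrightarrow> (w has_real_derivative ode_rhs r (w r)) (at r)"
    using assms(2) unfolding solves_on_def by auto
  have "\<exists>k. \<forall>r\<in>I. (sine_of_slope (w r) - sqrt 3 / 2) / r\<^sup>2 = k"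
  proof (rule has_field_derivative_zero_constant)
    show "convex I" using assms(1) by (simp only: connected_convex_1)
    fix r assume r: "r \<in> I"
    have "((\<lambda>x. (sine_of_slope (w x) - sqrt 3 / 2) / x\<^sup>2) has_real_derivative 0) (at r)"
      by (rule first_integral_has_derivative_zero[OF _ sol[OF r]]) (use pos[OF r] in simp)
    thus "((\<lambda>x. (sine_of_slope (w x) - sqrt 3 / 2) / x\<^sup>2) has_field_derivative 0) (at r within I)"
      by (rule has_field_derivative_at_within)
  qed
  then obtain k where k: "\<And>r. r \<in> I \<Longrightarrow> (sine_of_slope (w r) - sqrt 3 / 2) / r\<^sup>2 = k"
    by blast
  show thesis
  proof (rule that)
    fix r assume r: "r \<in> I"
    have "r\<^sup>2 \<noteq> 0" using pos[OF r] by simp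
    with k[OF r] show "sine_of_slope (w r) = sqrt 3 / 2 + k * r\<^sup>2"
      by (simp add: field_simps)
  qed
qed

definition explicit_solution :: "real \<Rightarrow> real \<Rightarrow> real" where
  "explicit_solution k r = slope_of_sine (sqrt 3 / 2 + k * r\<^sup>2)"

lemma solves_on_imp_explicit_solution:
  assumes "connected I" "solves_on w I"
  obtains k where "\<And>r. r \<in> I \<Longrightarrow> w r = explicit_solution k r"
    and "\<And>r. r \<in> I \<Longrightarrow> \<bar>sqrt 3 / 2 + k * r\<^sup>2\<bar> < 1"
proof -
  obtain k where k: "\<And>r. r \<in> I \<Longrightarrow> sine_of_slope (w r) = sqrt 3 / 2 + k * r\<^sup>2"
    using solves_on_imp_sine_of_slope_quadratic[OF assms] by blast
  show thesis
  proof (rule that)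
    fix r assume "r \<in> I"
    show "w r = explicit_solution k r"
      using slope_of_sine_sine_of_slope[of "w r"] k[OF \<open>r \<in> I\<close>] by (simp add: explicit_solution_def)
    show "\<bar>sqrt 3 / 2 + k * r\<^sup>2\<bar> < 1"
      using abs_sine_of_slope_less_1[of "w r"] k[OF \<open>r \<in> I\<close>] by simp
  qed
qed

lemma solves_on_explicit_solution:
  assumes "I \<subseteq> {0<..}" "\<And>r. r \<in> I \<Longrightarrow> \<bar>sqrt 3 / 2 + k * r\<^sup>2\<bar> < 1"
  shows "solves_on (explicit_solution k) I"
  unfolding solves_on_def
proof (intro conjI ballI)
  show "I \<subseteq> {0<..}" by fact
  fix r assume "r \<in> I"
  define u where "u = sqrt 3 / 2 + k * r\<^sup>2"
  have u: "\<bar>u\<bar> < 1" and "r > 0" using assms \<open>r \<in> I\<close> by (auto simp: u_def)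
  have q: "sqrt (1 - u\<^sup>2) > 0" using u by (simp add: abs_square_less_1)
  have inner: "((\<lambda>r. sqrt 3 / 2 + k * r\<^sup>2) has_real_derivative 2 * k * r) (at r)"
    by (auto intro!: derivative_eq_intros)
  have "(explicit_solution k has_real_derivative 1 / (sqrt (1 - u\<^sup>2)) ^ 3 * (2 * k * r)) (at r)"
    using DERIV_chain2[OF has_real_derivative_slope_of_sine[OF u, unfolded u_def] inner]
    unfolding explicit_solution_def[abs_def] u_def .
  moreover have "ode_rhs r (explicit_solution k r) = 1 / (sqrt (1 - u\<^sup>2)) ^ 3 * (2 * k * r)"
  proof -
    have "2 * u - sqrt 3 = 2 * k * r\<^sup>2" by (simp add: u_def)
    thus ?thesis
      unfolding ode_rhs_eq_sine_of_slope explicit_solution_def u_def[symmetric]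
        sine_of_slope_slope_of_sine[OF u]
      using \<open>r > 0\<close> q by (simp add: field_simps power2_eq_square power3_eq_cube)
  qed
  ultimately show "(explicit_solution k has_real_derivative ode_rhs r (explicit_solution k r)) (at r)"
    by simp
qed

lemma tendsto_explicit_solution_sqrt3:
  assumes "((\<lambda>x. k x * (r x)\<^sup>2) \<longlongrightarrow> 0) F"
  shows "((\<lambda>x. explicit_solution (k x) (r x)) \<longlongrightarrow> sqrt 3) F"
proof -
  have "((\<lambda>x. sqrt 3 / 2 + k x * (r x)\<^sup>2) \<longlongrightarrow> sqrt 3 / 2) F"
    using tendsto_add[OF tendsto_const assms, of "sqrt 3 / 2"] by simp
  thus ?thesis
    unfolding explicit_solution_def
    using tendsto_slope_of_sine abs_sqrt3_half_less_1 slope_of_sine_sqrt3_half by metis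
qed

lemma explicit_solution_gt_sqrt3:
  assumes "0 < k * r\<^sup>2" "\<bar>sqrt 3 / 2 + k * r\<^sup>2\<bar> < 1"
  shows "explicit_solution k r > sqrt 3"
proof -
  have "slope_of_sine (sqrt 3 / 2) < slope_of_sine (sqrt 3 / 2 + k * r\<^sup>2)"
    using assms abs_sqrt3_half_less_1 unfolding abs_less_iff
    by (intro slope_of_sine_strict_mono) linarith+
  thus ?thesis by (simp add: explicit_solution_def slope_of_sine_sqrt3_half)
qed

lemma explicit_solution_less_sqrt3:
  assumes "k * r\<^sup>2 < 0" "\<bar>sqrt 3 / 2 + k * r\<^sup>2\<bar> < 1"
  shows "explicit_solution k r < sqrt 3"
proof -
  have "slope_of_sine (sqrt 3 / 2 + k * r\<^sup>2) < slope_of_sine (sqrt 3 / 2)"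
    using assms abs_sqrt3_half_less_1 unfolding abs_less_iff
    by (intro slope_of_sine_strict_mono) linarith+
  thus ?thesis by (simp add: explicit_solution_def slope_of_sine_sqrt3_half)
qed

lemma solves_on_sqrt3: "solves_on (\<lambda>_. sqrt 3) {0<..}"
proof -
  have "solves_on (explicit_solution 0) {0<..}"
    using abs_sqrt3_half_less_1 by (intro solves_on_explicit_solution) auto
  thus ?thesis by (simp add: explicit_solution_def[abs_def] slope_of_sine_sqrt3_half)
qed

lemma r0_squared: "(r0 \<rho>)\<^sup>2 = (1 - sqrt 3 / 2) * \<rho>\<^sup>2"
  using sqrt3_less_2 by (simp add: r0_def power_mult_distrib diff_divide_distrib)

lemma r0_pos: "\<rho> > 0 \<Longrightarrow> r0 \<rho> > 0"
  unfolding r0_def using sqrt3_less_2 by (intro mult_pos_pos) auto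

lemma less_r0_iff:
  assumes "\<rho> > 0" "r \<ge> 0"
  shows "r < r0 \<rho> \<longleftrightarrow> sqrt 3 / 2 + 1 / \<rho>\<^sup>2 * r\<^sup>2 < 1"
proof -
  have "r0 \<rho> \<ge> 0" using r0_pos[OF assms(1)] by simp
  hence "r < r0 \<rho> \<longleftrightarrow> r\<^sup>2 < (1 - sqrt 3 / 2) * \<rho>\<^sup>2"
    using assms(2) less_iff_square_less r0_squared by metis
  also have "\<dots> \<longleftrightarrow> sqrt 3 / 2 + 1 / \<rho>\<^sup>2 * r\<^sup>2 < 1"
    using assms(1) by (simp add: field_simps)
  finally show ?thesis .
qed

lemma b_end_squared: "(b_end a)\<^sup>2 = (2 + sqrt 3) / sqrt 3 * a\<^sup>2"
  by (simp add: b_end_def power_mult_distrib add_nonneg_nonneg)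

lemma b_end_pos: "a > 0 \<Longrightarrow> b_end a > 0"
  unfolding b_end_def by (intro mult_pos_pos real_sqrt_gt_zero divide_pos_pos add_pos_pos) auto

lemma less_b_end_iff:
  assumes "a > 0" "r \<ge> 0"
  shows "r < b_end a \<longleftrightarrow> -1 < sqrt 3 / 2 + - (sqrt 3 / 2) / a\<^sup>2 * r\<^sup>2"
proof -
  have "b_end a \<ge> 0" using b_end_pos[OF assms(1)] by simp
  hence "r < b_end a \<longleftrightarrow> r\<^sup>2 < (2 + sqrt 3) / sqrt 3 * a\<^sup>2"
    using assms(2) less_iff_square_less b_end_squared by metis
  also have "\<dots> \<longleftrightarrow> -1 < sqrt 3 / 2 + - (sqrt 3 / 2) / a\<^sup>2 * r\<^sup>2"
    using assms(1) by (simp add: field_simps)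
  finally show ?thesis .
qed

lemma w_plus_eq_explicit_solution:
  assumes "\<rho> > 0"
  shows "w_plus \<rho> = explicit_solution (1 / \<rho>\<^sup>2)"
proof
  fix r
  have "sqrt 3 / 2 + 1 / \<rho>\<^sup>2 * r\<^sup>2 = (r\<^sup>2 + sqrt 3 / 2 * \<rho>\<^sup>2) / \<rho>\<^sup>2"
    using assms by (simp add: field_simps)
  hence "explicit_solution (1 / \<rho>\<^sup>2) r = slope_of_sine ((r\<^sup>2 + sqrt 3 / 2 * \<rho>\<^sup>2) / \<rho>\<^sup>2)"
    by (simp only: explicit_solution_def)
  also have "\<dots> = (r\<^sup>2 + sqrt 3 / 2 * \<rho>\<^sup>2) / sqrt ((\<rho>\<^sup>2)\<^sup>2 - (r\<^sup>2 + sqrt 3 / 2 * \<rho>\<^sup>2)\<^sup>2)"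
    using assms by (simp add: slope_of_sine_divide)
  also have "\<dots> = w_plus \<rho> r" by (simp add: w_plus_def)
  finally show "w_plus \<rho> r = explicit_solution (1 / \<rho>\<^sup>2) r" ..
qed

lemma w_minus_eq_explicit_solution:
  assumes "a > 0"
  shows "w_minus a = explicit_solution (- (sqrt 3 / 2) / a\<^sup>2)"
proof
  fix r
  define x where "x = - sqrt 3 * (r\<^sup>2 - a\<^sup>2)"
  have "sqrt 3 / 2 + - (sqrt 3 / 2) / a\<^sup>2 * r\<^sup>2 = x / (2 * a\<^sup>2)"
    using assms by (simp add: x_def field_simps)
  hence "explicit_solution (- (sqrt 3 / 2) / a\<^sup>2) r = slope_of_sine (x / (2 * a\<^sup>2))"
    by (simp only: explicit_solution_def)
  also have "\<dots> = x / sqrt ((2 * a\<^sup>2)\<^sup>2 - x\<^sup>2)"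
    using assms by (simp add: slope_of_sine_divide)
  also have "(2 * a\<^sup>2)\<^sup>2 - x\<^sup>2 = 4 * a ^ 4 - 3 * (r\<^sup>2 - a\<^sup>2)\<^sup>2"
    by (simp add: x_def power_mult_distrib)
  finally show "w_minus a r = explicit_solution (- (sqrt 3 / 2) / a\<^sup>2) r"
    by (simp add: w_minus_def x_def)
qed

lemma w_minus_eq_rho_form:
  assumes "\<rho> > 0" "a > 0" "a\<^sup>2 = sqrt 3 / 2 * \<rho>\<^sup>2"
  shows "w_minus a r = - (r\<^sup>2 - sqrt 3 / 2 * \<rho>\<^sup>2) / sqrt (\<rho> ^ 4 - (r\<^sup>2 - sqrt 3 / 2 * \<rho>\<^sup>2)\<^sup>2)"
proof -
  define x where "x = - (r\<^sup>2 - sqrt 3 / 2 * \<rho>\<^sup>2)"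
  have "sqrt 3 / 2 + - (sqrt 3 / 2) / a\<^sup>2 * r\<^sup>2 = x / \<rho>\<^sup>2"
    using assms by (simp add: x_def field_simps)
  hence "w_minus a r = slope_of_sine (x / \<rho>\<^sup>2)"
    by (simp only: w_minus_eq_explicit_solution[OF assms(2)] explicit_solution_def)
  also have "\<dots> = x / sqrt ((\<rho>\<^sup>2)\<^sup>2 - x\<^sup>2)"
    using assms by (simp add: slope_of_sine_divide)
  finally show ?thesis by (simp add: x_def power2_commute)
qed

lemma b_end_eq_rho_form:
  assumes "\<rho> > 0" "a > 0" "a\<^sup>2 = sqrt 3 / 2 * \<rho>\<^sup>2"
  shows "b_end a = sqrt ((2 + sqrt 3) / 2) * \<rho>"
proof -
  have "b_end a = sqrt ((2 + sqrt 3) / sqrt 3 * a\<^sup>2)"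
    unfolding b_end_def real_sqrt_mult using assms(2) by simp
  also have "\<dots> = sqrt ((2 + sqrt 3) / 2 * \<rho>\<^sup>2)"
    unfolding assms(3) by simp
  also have "\<dots> = sqrt ((2 + sqrt 3) / 2) * \<rho>"
    unfolding real_sqrt_mult using assms(1) by simp
  finally show ?thesis .
qed

lemma w_plus_argument_bounds:
  assumes "\<rho> > 0" "r \<in> {0<..<r0 \<rho>}"
  shows "0 < 1 / \<rho>\<^sup>2 * r\<^sup>2" and "\<bar>sqrt 3 / 2 + 1 / \<rho>\<^sup>2 * r\<^sup>2\<bar> < 1"
proof -
  show pos: "0 < 1 / \<rho>\<^sup>2 * r\<^sup>2" using assms by simp
  have "sqrt 3 / 2 + 1 / \<rho>\<^sup>2 * r\<^sup>2 < 1" using assms less_r0_iff[of \<rho> r] by simp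
  moreover have "sqrt 3 > 0" by simp
  ultimately show "\<bar>sqrt 3 / 2 + 1 / \<rho>\<^sup>2 * r\<^sup>2\<bar> < 1" using pos by (simp add: abs_less_iff)
qed

lemma solves_on_w_plus:
  assumes "\<rho> > 0"
  shows "solves_on (w_plus \<rho>) {0<..<r0 \<rho>}"
  unfolding w_plus_eq_explicit_solution[OF assms]
proof (rule solves_on_explicit_solution)
  show "{0<..<r0 \<rho>} \<subseteq> {0<..}" by auto
qed (rule w_plus_argument_bounds(2)[OF assms])

lemma w_plus_gt_sqrt3:
  assumes "\<rho> > 0" "r \<in> {0<..<r0 \<rho>}"
  shows "w_plus \<rho> r > sqrt 3"
  unfolding w_plus_eq_explicit_solution[OF assms(1)]
  using w_plus_argument_bounds[OF assms] by (rule explicit_solution_gt_sqrt3)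

lemma tendsto_w_plus_at_0:
  assumes "\<rho> > 0"
  shows "(w_plus \<rho> \<longlongrightarrow> sqrt 3) (at_right 0)"
proof -
  have "((\<lambda>r. 1 / \<rho>\<^sup>2 * r\<^sup>2) \<longlongrightarrow> 1 / \<rho>\<^sup>2 * 0\<^sup>2) (at_right 0)"
    by (intro tendsto_intros)
  hence "((\<lambda>r. explicit_solution (1 / \<rho>\<^sup>2) r) \<longlongrightarrow> sqrt 3) (at_right 0)"
    by (intro tendsto_explicit_solution_sqrt3) simp
  thus ?thesis by (simp add: w_plus_eq_explicit_solution[OF assms])
qed

lemma filterlim_w_plus_at_r0:
  assumes "\<rho> > 0"
  shows "filterlim (w_plus \<rho>) at_top (at_left (r0 \<rho>))"
proof -
  have "((\<lambda>r. sqrt 3 / 2 + 1 / \<rho>\<^sup>2 * r\<^sup>2) \<longlongrightarrow> sqrt 3 / 2 + 1 / \<rho>\<^sup>2 * (r0 \<rho>)\<^sup>2) (at_left (r0 \<rho>))"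
    by (intro tendsto_intros)
  moreover have "sqrt 3 / 2 + 1 / \<rho>\<^sup>2 * (r0 \<rho>)\<^sup>2 = 1"
    using assms by (simp add: r0_squared)
  moreover have "eventually (\<lambda>r. \<bar>sqrt 3 / 2 + 1 / \<rho>\<^sup>2 * r\<^sup>2\<bar> < 1) (at_left (r0 \<rho>))"
    using eventually_at_left_real[OF r0_pos[OF assms]]
    by eventually_elim (rule w_plus_argument_bounds(2)[OF assms])
  ultimately show ?thesis
    unfolding w_plus_eq_explicit_solution[OF assms] explicit_solution_def[abs_def]
    by (intro filterlim_slope_of_sine_at_top) simp_all
qed

lemma tendsto_w_plus_at_top: "((\<lambda>\<rho>. w_plus \<rho> r) \<longlongrightarrow> sqrt 3) at_top"
proof (rule Lim_transform_eventually)
  show "((\<lambda>\<rho>. explicit_solution (1 / \<rho>\<^sup>2) r) \<longlongrightarrow> sqrt 3) at_top"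
    by (rule tendsto_explicit_solution_sqrt3 tendsto_mult_left_zero tendsto_divide_square_at_top)+
  show "eventually (\<lambda>\<rho>. explicit_solution (1 / \<rho>\<^sup>2) r = w_plus \<rho> r) at_top"
    using eventually_gt_at_top[of 0] by eventually_elim (simp add: w_plus_eq_explicit_solution)
qed

lemma w_minus_argument_bounds:
  assumes "a > 0" "r \<in> {0<..<b_end a}"
  shows "- (sqrt 3 / 2) / a\<^sup>2 * r\<^sup>2 < 0" and "\<bar>sqrt 3 / 2 + - (sqrt 3 / 2) / a\<^sup>2 * r\<^sup>2\<bar> < 1"
proof -
  show neg: "- (sqrt 3 / 2) / a\<^sup>2 * r\<^sup>2 < 0" using assms by (simp add: mult_neg_pos)
  have "-1 < sqrt 3 / 2 + - (sqrt 3 / 2) / a\<^sup>2 * r\<^sup>2" using assms less_b_end_iff[of a r] by simp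
  with neg sqrt3_less_2 show "\<bar>sqrt 3 / 2 + - (sqrt 3 / 2) / a\<^sup>2 * r\<^sup>2\<bar> < 1"
    by (simp add: abs_less_iff)
qed

lemma solves_on_w_minus:
  assumes "a > 0"
  shows "solves_on (w_minus a) {0<..<b_end a}"
  unfolding w_minus_eq_explicit_solution[OF assms]
proof (rule solves_on_explicit_solution)
  show "{0<..<b_end a} \<subseteq> {0<..}" by auto
qed (rule w_minus_argument_bounds(2)[OF assms])

lemma w_minus_at_a: "w_minus a a = 0"
  by (simp add: w_minus_def)

lemma w_minus_less_sqrt3:
  assumes "a > 0" "r \<in> {0<..<b_end a}"
  shows "w_minus a r < sqrt 3"
  unfolding w_minus_eq_explicit_solution[OF assms(1)]
  using w_minus_argument_bounds[OF assms] by (rule explicit_solution_less_sqrt3)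

lemma tendsto_w_minus_at_0:
  assumes "a > 0"
  shows "(w_minus a \<longlongrightarrow> sqrt 3) (at_right 0)"
proof -
  have "((\<lambda>r. - (sqrt 3 / 2) / a\<^sup>2 * r\<^sup>2) \<longlongrightarrow> - (sqrt 3 / 2) / a\<^sup>2 * 0\<^sup>2) (at_right 0)"
    by (intro tendsto_intros)
  hence "((\<lambda>r. explicit_solution (- (sqrt 3 / 2) / a\<^sup>2) r) \<longlongrightarrow> sqrt 3) (at_right 0)"
    by (intro tendsto_explicit_solution_sqrt3) simp
  thus ?thesis by (simp add: w_minus_eq_explicit_solution[OF assms])
qed

lemma filterlim_w_minus_at_b_end:
  assumes "a > 0"
  shows "filterlim (w_minus a) at_bot (at_left (b_end a))"
proof -
  have "((\<lambda>r. sqrt 3 / 2 + - (sqrt 3 / 2) / a\<^sup>2 * r\<^sup>2)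
      \<longlongrightarrow> sqrt 3 / 2 + - (sqrt 3 / 2) / a\<^sup>2 * (b_end a)\<^sup>2) (at_left (b_end a))"
    by (intro tendsto_intros)
  moreover have "sqrt 3 / 2 + - (sqrt 3 / 2) / a\<^sup>2 * (b_end a)\<^sup>2 = -1"
    using assms by (simp add: b_end_squared field_simps)
  moreover have "eventually (\<lambda>r. \<bar>sqrt 3 / 2 + - (sqrt 3 / 2) / a\<^sup>2 * r\<^sup>2\<bar> < 1) (at_left (b_end a))"
    using eventually_at_left_real[OF b_end_pos[OF assms]]
    by eventually_elim (rule w_minus_argument_bounds(2)[OF assms])
  ultimately show ?thesis
    unfolding w_minus_eq_explicit_solution[OF assms] explicit_solution_def[abs_def]
    by (intro filterlim_slope_of_sine_at_bot) simp_all
qed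

lemma tendsto_w_minus_at_top: "((\<lambda>a. w_minus a r) \<longlongrightarrow> sqrt 3) at_top"
proof (rule Lim_transform_eventually)
  show "((\<lambda>a. explicit_solution (- (sqrt 3 / 2) / a\<^sup>2) r) \<longlongrightarrow> sqrt 3) at_top"
    by (rule tendsto_explicit_solution_sqrt3 tendsto_mult_left_zero tendsto_divide_square_at_top)+
  show "eventually (\<lambda>a. explicit_solution (- (sqrt 3 / 2) / a\<^sup>2) r = w_minus a r) at_top"
    using eventually_gt_at_top[of 0] by eventually_elim (simp add: w_minus_eq_explicit_solution)
qed

lemma solves_on_classification:
  assumes "connected I" "solves_on w I"
  shows "(\<forall>r\<in>I. w r = sqrt 3)
     \<or> (\<exists>\<rho>>0. I \<subseteq> {0<..<r0 \<rho>} \<and> (\<forall>r\<in>I. w r = w_plus \<rho> r))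
     \<or> (\<exists>a>0. I \<subseteq> {0<..<b_end a} \<and> (\<forall>r\<in>I. w r = w_minus a r))"
proof -
  have pos: "\<And>r. r \<in> I \<Longrightarrow> r > 0" using assms(2) by (auto simp: solves_on_def)
  obtain k where w: "\<And>r. r \<in> I \<Longrightarrow> w r = explicit_solution k r"
    and bound: "\<And>r. r \<in> I \<Longrightarrow> \<bar>sqrt 3 / 2 + k * r\<^sup>2\<bar> < 1"
    using solves_on_imp_explicit_solution[OF assms] by blast
  consider "k = 0" | "k > 0" | "k < 0" by linarith
  then show ?thesis
  proof cases
    case 1
    then show ?thesis using w by (simp add: explicit_solution_def slope_of_sine_sqrt3_half)
  next
    case 2
    define \<rho> where "\<rho> = 1 / sqrt k"
    have "\<rho> > 0" and k: "k = 1 / \<rho>\<^sup>2" using 2 by (simp_all add: \<rho>_def power_divide)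
    have "I \<subseteq> {0<..<r0 \<rho>}"
    proof
      fix r assume "r \<in> I"
      with pos bound less_r0_iff[OF \<open>\<rho> > 0\<close>, of r] show "r \<in> {0<..<r0 \<rho>}"
        by (force simp: abs_less_iff k)
    qed
    moreover have "\<forall>r\<in>I. w r = w_plus \<rho> r"
      using w by (simp add: w_plus_eq_explicit_solution[OF \<open>\<rho> > 0\<close>] k)
    ultimately show ?thesis using \<open>\<rho> > 0\<close> by blast
  next
    case 3
    define a where "a = sqrt (sqrt 3 / 2 / - k)"
    have q: "sqrt 3 / 2 / - k > 0" using 3 by (intro divide_pos_pos) auto
    hence "a > 0" and "a\<^sup>2 = sqrt 3 / 2 / - k" by (simp_all add: a_def)
    hence k: "k = - (sqrt 3 / 2) / a\<^sup>2" using 3 by (simp add: field_simps)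
    have "I \<subseteq> {0<..<b_end a}"
    proof
      fix r assume "r \<in> I"
      with pos bound less_b_end_iff[OF \<open>a > 0\<close>, of r] show "r \<in> {0<..<b_end a}"
        by (force simp: abs_less_iff k)
    qed
    moreover have "\<forall>r\<in>I. w r = w_minus a r"
      using w by (simp add: w_minus_eq_explicit_solution[OF \<open>a > 0\<close>] k)
    ultimately show ?thesis using \<open>a > 0\<close> by blast
  qed
qed

theorem theorem4p3:
  shows
  \<comment> \<open>classification: every solution on an open interval is a restriction of one listed\<close>
  "(\<forall>w I. open I \<and> connected I \<and> I \<noteq> {} \<and> solves_on w I \<longrightarrow>
       (\<forall>r\<in>I. w r = sqrt 3)
     \<or> (\<exists>\<rho>>0. I \<subseteq> {0<..<r0 \<rho>} \<and> (\<forall>r\<in>I. w r = w_plus \<rho> r))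
     \<or> (\<exists>a>0. I \<subseteq> {0<..<b_end a} \<and> (\<forall>r\<in>I. w r = w_minus a r)))
   \<comment> \<open>(1) the constant is a solution\<close>
   \<and> solves_on (\<lambda>_. sqrt 3) {0<..}
   \<comment> \<open>(2)\<close>
   \<and> (\<forall>\<rho>>0. solves_on (w_plus \<rho>) {0<..<r0 \<rho>}
        \<and> (\<forall>r\<in>{0<..<r0 \<rho>}. w_plus \<rho> r > sqrt 3)
        \<and> (w_plus \<rho> \<longlongrightarrow> sqrt 3) (at_right 0)
        \<and> filterlim (w_plus \<rho>) at_top (at_left (r0 \<rho>)))
   \<and> (\<forall>r>0. ((\<lambda>\<rho>. w_plus \<rho> r) \<longlongrightarrow> sqrt 3) at_top)
   \<comment> \<open>(3)\<close>
   \<and> (\<forall>a>0. solves_on (w_minus a) {0<..<b_end a}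
        \<and> w_minus a a = 0
        \<and> (\<forall>r\<in>{0<..<b_end a}. w_minus a r < sqrt 3)
        \<and> (w_minus a \<longlongrightarrow> sqrt 3) (at_right 0)
        \<and> filterlim (w_minus a) at_bot (at_left (b_end a)))
   \<and> (\<forall>r>0. ((\<lambda>a. w_minus a r) \<longlongrightarrow> sqrt 3) at_top)
   \<comment> \<open>equivalent rho0-parametrisation of family (3), with a^2 = (sqrt 3 / 2) rho0^2\<close>
   \<and> (\<forall>\<rho>>0. \<forall>a>0. a\<^sup>2 = sqrt 3 / 2 * \<rho>\<^sup>2 \<longrightarrow>
        b_end a = sqrt ((2 + sqrt 3) / 2) * \<rho>
        \<and> (\<forall>r. w_minus a r = - (r\<^sup>2 - sqrt 3 / 2 * \<rho>\<^sup>2) / sqrt (\<rho> ^ 4 - (r\<^sup>2 - sqrt 3 / 2 * \<rho>\<^sup>2)\<^sup>2)))"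
  using solves_on_classification solves_on_sqrt3
    solves_on_w_plus w_plus_gt_sqrt3 tendsto_w_plus_at_0 filterlim_w_plus_at_r0 tendsto_w_plus_at_top
    solves_on_w_minus w_minus_at_a w_minus_less_sqrt3 tendsto_w_minus_at_0 filterlim_w_minus_at_b_end
    tendsto_w_minus_at_top b_end_eq_rho_form w_minus_eq_rho_form
  by (intro conjI allI impI ballI) auto

end
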